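(* Let $\mathcal{S}$ be the set of non-uniformly stable matchings in $G$, let $\equiv$ be the relation on $\mathcal{S}$ with $\mu\equiv\sigma$ iff $\mu(v)\sim_v\sigma(v)$ for every $v\in V_1$, let $\mathbb{C}$ be the set of its equivalence classes and $\langle\mu\rangle$ the class of $\mu$. Then the operations $\langle\mu\rangle\wedge_\equiv\langle\sigma\rangle:=\langle\mu\wedge\sigma\rangle$ and $\langle\mu\rangle\vee_\equiv\langle\sigma\rangle:=\langle\mu\vee\sigma\rangle$ are well-defined on $\mathbb{C}$, and $(\mathbb{C},\wedge_\equiv,\vee_\equiv)$ is a distributive lattice (i.e., both operations are idempotent, commutative and associative, satisfy the absorption laws, and each distributes over the other).
   Context: Setting: $G=(V,E)$ is a finite simple bipartite graph with $V=V_1\sqcup V_2$, every edge joining a vertex of $V_1$ to a vertex of $V_2$; an edge is identified with the set of its two endpoints. $E$ is partitioned into $E_1,E_2$. For $F\subseteq E$ and $v\in V$, $F(v)$ is the set of edges of $F$ incident to $v$. For every $v\in V$ there is a transitive and complete binary relation $\succsim_v$ on $E(v)\cup\{\emptyset\}$ with $e\succsim_v\emptyset$ and $\emptyset\not\succsim_v e$ for all $e\in E(v)$; $e\succ_v f$ means $e\succsim_v f$ and $f\not\succsim_v e$; $e\sim_v f$ means both $e\succsim_v f$ and $f\succsim_v e$. A matching is $\mu\subseteq E$ with $|\mu(v)|\le1$ for all $v$; $\mu(v)$ denotes the edge of $\mu$ at $v$, or $\emptyset$. An edge $e\in E\setminus\mu$ weakly blocks $\mu$ if $e\succsim_v\mu(v)$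 for every $v\in e$; it strongly blocks $\mu$ if additionally $e\succ_w\mu(w)$ for some $w\in e$. $\mu$ is non-uniformly stable if no edge of $E_1\setminus\mu$ weakly blocks $\mu$ and no edge of $E_2\setminus\mu$ strongly blocks $\mu$. For non-uniformly stable $\mu,\sigma$, define for each $v\in V_1$: $(\mu\wedge\sigma)(v)=\mu(v)$ if $\mu(v)\succsim_v\sigma(v)$ and $=\sigma(v)$ if $\sigma(v)\succ_v\mu(v)$; $(\mu\vee\sigma)(v)=\mu(v)$ if $\sigma(v)\succsim_v\mu(v)$ and $=\sigma(v)$ if $\mu(v)\succ_v\sigma(v)$; $\mu\wedge\sigma$ and $\mu\vee\sigma$ are the corresponding edge sets $\{(\mu\odot\sigma)(v):v\in V_1\}\setminus\{\emptyset\}$, which are non-uniformly stable matchings. *)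

theory Defs
  imports Main
begin

text \<open>Edges are two-element vertex sets; the empty set {} plays the role of the
  symbol "no edge". A preference profile P assigns to each vertex v a relation
  P v on edges (P v e f meaning "e is weakly preferred to f at v").\<close>

definition inc_edges :: "'a set set \<Rightarrow> 'a \<Rightarrow> 'a set set" where
  "inc_edges F v = {e \<in> F. v \<in> e}"

definition setting ::
  "'a set \<Rightarrow> 'a set \<Rightarrow> 'a set set \<Rightarrow> 'a set set \<Rightarrow> 'a set set
   \<Rightarrow> ('a \<Rightarrow> 'a set \<Rightarrow> 'a set \<Rightarrow> bool) \<Rightarrow> bool" where
  "setting V1 V2 E E1 E2 P \<longleftrightarrow>
     finite V1 \<and> finite V2 \<and> V1 \<inter> V2 = {} \<and>
     E \<subseteq> {{a, b} | a b. a \<in> V1 \<and> b \<in> V2} \<and>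
     E1 \<union> E2 = E \<and> E1 \<inter> E2 = {} \<and>
     (\<forall>v \<in> V1 \<union> V2.
        (\<forall>e \<in> inc_edges E v \<union> {{}}. \<forall>f \<in> inc_edges E v \<union> {{}}.
            P v e f \<or> P v f e) \<and>
        (\<forall>e \<in> inc_edges E v \<union> {{}}. \<forall>f \<in> inc_edges E v \<union> {{}}.
           \<forall>g \<in> inc_edges E v \<union> {{}}. P v e f \<longrightarrow> P v f g \<longrightarrow> P v e g) \<and>
        (\<forall>e \<in> inc_edges E v. P v e {} \<and> \<not> P v {} e))"

definition strict_pref :: "('a \<Rightarrow> 'a set \<Rightarrow> 'a set \<Rightarrow> bool) \<Rightarrow> 'a \<Rightarrow> 'a set \<Rightarrow> 'a set \<Rightarrow> bool" where
  "strict_pref P v e f \<longleftrightarrow> P v e f \<and> \<not> P v f e"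

definition indiff :: "('a \<Rightarrow> 'a set \<Rightarrow> 'a set \<Rightarrow> bool) \<Rightarrow> 'a \<Rightarrow> 'a set \<Rightarrow> 'a set \<Rightarrow> bool" where
  "indiff P v e f \<longleftrightarrow> P v e f \<and> P v f e"

definition is_matching :: "'a set set \<Rightarrow> 'a set set \<Rightarrow> bool" where
  "is_matching E \<mu> \<longleftrightarrow> \<mu> \<subseteq> E \<and> (\<forall>v. card (inc_edges \<mu> v) \<le> 1)"

definition medge :: "'a set set \<Rightarrow> 'a \<Rightarrow> 'a set" where
  "medge \<mu> v = (if \<exists>e \<in> \<mu>. v \<in> e then (THE e. e \<in> \<mu> \<and> v \<in> e) else {})"

definition weakly_blocks :: "('a \<Rightarrow> 'a set \<Rightarrow> 'a set \<Rightarrow> bool) \<Rightarrow> 'a set set \<Rightarrow> 'a set \<Rightarrow> bool" where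
  "weakly_blocks P \<mu> e \<longleftrightarrow> e \<notin> \<mu> \<and> (\<forall>v \<in> e. P v e (medge \<mu> v))"

definition strongly_blocks :: "('a \<Rightarrow> 'a set \<Rightarrow> 'a set \<Rightarrow> bool) \<Rightarrow> 'a set set \<Rightarrow> 'a set \<Rightarrow> bool" where
  "strongly_blocks P \<mu> e \<longleftrightarrow> weakly_blocks P \<mu> e \<and> (\<exists>w \<in> e. strict_pref P w e (medge \<mu> w))"

definition nu_stable ::
  "'a set set \<Rightarrow> 'a set set \<Rightarrow> 'a set set \<Rightarrow> ('a \<Rightarrow> 'a set \<Rightarrow> 'a set \<Rightarrow> bool)
   \<Rightarrow> 'a set set \<Rightarrow> bool" where
  "nu_stable E E1 E2 P \<mu> \<longleftrightarrow> is_matching E \<mu> \<and>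
     (\<forall>e \<in> E1 - \<mu>. \<not> weakly_blocks P \<mu> e) \<and>
     (\<forall>e \<in> E2 - \<mu>. \<not> strongly_blocks P \<mu> e)"

definition NUS :: "'a set set \<Rightarrow> 'a set set \<Rightarrow> 'a set set \<Rightarrow> ('a \<Rightarrow> 'a set \<Rightarrow> 'a set \<Rightarrow> bool)
   \<Rightarrow> 'a set set set" where
  "NUS E E1 E2 P = {\<mu>. nu_stable E E1 E2 P \<mu>}"

definition meet :: "'a set \<Rightarrow> ('a \<Rightarrow> 'a set \<Rightarrow> 'a set \<Rightarrow> bool) \<Rightarrow> 'a set set \<Rightarrow> 'a set set \<Rightarrow> 'a set set" where
  "meet V1 P \<mu> \<sigma> =
     (\<lambda>v. if P v (medge \<mu> v) (medge \<sigma> v) then medge \<mu> v else medge \<sigma> v) ` V1 - {{}}"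

definition join :: "'a set \<Rightarrow> ('a \<Rightarrow> 'a set \<Rightarrow> 'a set \<Rightarrow> bool) \<Rightarrow> 'a set set \<Rightarrow> 'a set set \<Rightarrow> 'a set set" where
  "join V1 P \<mu> \<sigma> =
     (\<lambda>v. if P v (medge \<sigma> v) (medge \<mu> v) then medge \<mu> v else medge \<sigma> v) ` V1 - {{}}"

definition equivR :: "'a set \<Rightarrow> 'a set set \<Rightarrow> 'a set set \<Rightarrow> 'a set set \<Rightarrow>
   ('a \<Rightarrow> 'a set \<Rightarrow> 'a set \<Rightarrow> bool) \<Rightarrow> ('a set set \<times> 'a set set) set" where
  "equivR V1 E E1 E2 P = {(\<mu>, \<sigma>). \<mu> \<in> NUS E E1 E2 P \<and> \<sigma> \<in> NUS E E1 E2 P \<and>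
      (\<forall>v \<in> V1. indiff P v (medge \<mu> v) (medge \<sigma> v))}"

text \<open>The set C of equivalence classes, and the class operations (defined via
  representatives; well-definedness is part of the theorem).\<close>
definition classes :: "'a set \<Rightarrow> 'a set set \<Rightarrow> 'a set set \<Rightarrow> 'a set set \<Rightarrow>
   ('a \<Rightarrow> 'a set \<Rightarrow> 'a set \<Rightarrow> bool) \<Rightarrow> 'a set set set set" where
  "classes V1 E E1 E2 P = NUS E E1 E2 P // equivR V1 E E1 E2 P"

definition meetC :: "'a set \<Rightarrow> 'a set set \<Rightarrow> 'a set set \<Rightarrow> 'a set set \<Rightarrow>
   ('a \<Rightarrow> 'a set \<Rightarrow> 'a set \<Rightarrow> bool) \<Rightarrow> 'a set set set \<Rightarrow> 'a set set set \<Rightarrow> 'a set set set" where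
  "meetC V1 E E1 E2 P X Y =
     equivR V1 E E1 E2 P `` {meet V1 P (SOME \<mu>. \<mu> \<in> X) (SOME \<sigma>. \<sigma> \<in> Y)}"

definition joinC :: "'a set \<Rightarrow> 'a set set \<Rightarrow> 'a set set \<Rightarrow> 'a set set \<Rightarrow>
   ('a \<Rightarrow> 'a set \<Rightarrow> 'a set \<Rightarrow> bool) \<Rightarrow> 'a set set set \<Rightarrow> 'a set set set \<Rightarrow> 'a set set set" where
  "joinC V1 E E1 E2 P X Y =
     equivR V1 E E1 E2 P `` {join V1 P (SOME \<mu>. \<mu> \<in> X) (SOME \<sigma>. \<sigma> \<in> Y)}"

end

theory Submission
  imports Defs
begin

text \<open>If \<mu> and \<sigma> are stable and a vertex strictly prefers its \<mu>-edge to its \<sigma>-edge, then the other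
  endpoint of that \<mu>-edge strictly prefers its \<sigma>-edge, for otherwise the \<mu>-edge would block \<sigma>.
  On each side this injects the vertices strictly preferring \<mu> into the vertices of the other side
  strictly preferring \<sigma>, and comparing cardinalities shows that both injections are bijections.
  Consequently, when every vertex of V1 takes the better of its two edges, every vertex of V2 is
  left with the worse of its two edges: the result is a matching, and an edge blocking it blocks
  \<mu> or \<sigma>. The join is the same construction seen from V2. Finally, replacing each weak order
  by ranks embeds the classes of \<equiv> into functions V1 \<Rightarrow> nat, turning meet and join into
  pointwise max and min, so the lattice laws are those of (nat, max, min).\<close>

lemma setting_swap: "setting V1 V2 E E1 E2 P \<Longrightarrow> setting V2 V1 E E1 E2 P"
proof -
  assume st: "setting V1 V2 E E1 E2 P"
  have "E \<subseteq> {{a, b} | a b. a \<in> V2 \<and> b \<in> V1}"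
  proof
    fix e assume "e \<in> E"
    then obtain a b where "e = {a, b}" "a \<in> V1" "b \<in> V2" using st unfolding setting_def by blast
    then have "e = {b, a} \<and> b \<in> V2 \<and> a \<in> V1" by (simp add: insert_commute)
    then show "e \<in> {{a, b} | a b. a \<in> V2 \<and> b \<in> V1}" by blast
  qed
  with st show ?thesis unfolding setting_def Un_commute[of V2 V1] Int_commute[of V2 V1]
    by (elim conjE) (intro conjI; assumption)
qed

definition endpoint :: "'a set \<Rightarrow> 'a set \<Rightarrow> 'a" where
  "endpoint C e = (THE c. c \<in> C \<and> c \<in> e)"

definition better_edge :: "('a \<Rightarrow> 'a set \<Rightarrow> 'a set \<Rightarrow> bool) \<Rightarrow> 'a set set \<Rightarrow> 'a set set \<Rightarrow> 'a \<Rightarrow> 'a set" where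
  "better_edge P \<mu> \<sigma> v = (if P v (medge \<mu> v) (medge \<sigma> v) then medge \<mu> v else medge \<sigma> v)"

definition worse_edge :: "('a \<Rightarrow> 'a set \<Rightarrow> 'a set \<Rightarrow> bool) \<Rightarrow> 'a set set \<Rightarrow> 'a set set \<Rightarrow> 'a \<Rightarrow> 'a set" where
  "worse_edge P \<mu> \<sigma> v = (if P v (medge \<sigma> v) (medge \<mu> v) then medge \<mu> v else medge \<sigma> v)"

lemma meet_eq_better_edge: "meet V1 P \<mu> \<sigma> = better_edge P \<mu> \<sigma> ` V1 - {{}}"
  unfolding meet_def better_edge_def ..

lemma join_eq_worse_edge: "join V1 P \<mu> \<sigma> = worse_edge P \<mu> \<sigma> ` V1 - {{}}"
  unfolding join_def worse_edge_def ..

locale matching_setting =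
  fixes V1 V2 :: "'a set" and E E1 E2 :: "'a set set" and P :: "'a \<Rightarrow> 'a set \<Rightarrow> 'a set \<Rightarrow> bool"
  assumes setting: "setting V1 V2 E E1 E2 P"
begin

abbreviation Opt :: "'a \<Rightarrow> 'a set set" where
  "Opt v \<equiv> inc_edges E v \<union> {{}}"

abbreviation S :: "'a set set set" where
  "S \<equiv> NUS E E1 E2 P"

lemma finite_V1: "finite V1" and finite_V2: "finite V2" and V1_V2_disjoint: "V1 \<inter> V2 = {}"
  and E_bipartite: "E \<subseteq> {{a, b} | a b. a \<in> V1 \<and> b \<in> V2}"
  and E1_E2: "E1 \<union> E2 = E" and E1_E2_disjoint: "E1 \<inter> E2 = {}"
  using setting unfolding setting_def by auto

lemma pref_total: "v \<in> V1 \<union> V2 \<Longrightarrow> x \<in> Opt v \<Longrightarrow> y \<in> Opt v \<Longrightarrow> P v x y \<or> P v y x"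
  and pref_trans: "v \<in> V1 \<union> V2 \<Longrightarrow> x \<in> Opt v \<Longrightarrow> y \<in> Opt v \<Longrightarrow> z \<in> Opt v \<Longrightarrow>
      P v x y \<Longrightarrow> P v y z \<Longrightarrow> P v x z"
  and pref_empty: "v \<in> V1 \<union> V2 \<Longrightarrow> e \<in> inc_edges E v \<Longrightarrow> P v e {} \<and> \<not> P v {} e"
  using setting unfolding setting_def by blast+

lemma pref_refl: "v \<in> V1 \<union> V2 \<Longrightarrow> x \<in> Opt v \<Longrightarrow> P v x x"
  using pref_total by blast

lemma not_pref_strict: "v \<in> V1 \<union> V2 \<Longrightarrow> x \<in> Opt v \<Longrightarrow> y \<in> Opt v \<Longrightarrow> \<not> P v x y \<Longrightarrow> strict_pref P v y x"
  unfolding strict_pref_def using pref_total by blast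

lemma strict_pref_trans: "v \<in> V1 \<union> V2 \<Longrightarrow> x \<in> Opt v \<Longrightarrow> y \<in> Opt v \<Longrightarrow> z \<in> Opt v \<Longrightarrow>
    strict_pref P v x y \<Longrightarrow> P v y z \<Longrightarrow> strict_pref P v x z"
  unfolding strict_pref_def using pref_trans by blast

lemma strict_pref_nonempty: "v \<in> V1 \<union> V2 \<Longrightarrow> x \<in> Opt v \<Longrightarrow> y \<in> Opt v \<Longrightarrow> strict_pref P v x y \<Longrightarrow> x \<noteq> {}"
  unfolding strict_pref_def using pref_refl pref_empty by (metis Un_iff singletonD)

lemma finite_E: "finite E"
proof -
  have "E \<subseteq> (\<lambda>(a, b). {a, b}) ` (V1 \<times> V2)" using E_bipartite by auto
  then show ?thesis using finite_V1 finite_V2 finite_subset by blast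
qed

lemma finite_Opt: "finite (Opt v)"
  using finite_E unfolding inc_edges_def by auto

lemma edgeE:
  assumes "e \<in> E" obtains a b where "e = {a, b}" "a \<in> V1" "b \<in> V2"
  using assms E_bipartite by blast

lemma edge_nonempty: "e \<in> E \<Longrightarrow> e \<noteq> {}"
  by (blast elim: edgeE)

lemma edge_vertex: "e \<in> E \<Longrightarrow> v \<in> e \<Longrightarrow> v \<in> V1 \<union> V2"
  by (blast elim: edgeE)

lemma edge_two_vertices: "e \<in> E \<Longrightarrow> v \<in> e \<Longrightarrow> w \<in> e \<Longrightarrow> v \<noteq> w \<Longrightarrow> u \<in> e \<Longrightarrow> u = v \<or> u = w"
  by (blast elim: edgeE)

lemma edge_meets_V1: "e \<in> E \<Longrightarrow> \<exists>a \<in> V1. a \<in> e"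
  and edge_meets_V2: "e \<in> E \<Longrightarrow> \<exists>b \<in> V2. b \<in> e"
  by (blast elim: edgeE)+

lemma edge_side_unique:
  "e \<in> E \<Longrightarrow> c \<in> e \<Longrightarrow> c' \<in> e \<Longrightarrow> c \<in> C \<Longrightarrow> c' \<in> C \<Longrightarrow> C = V1 \<or> C = V2 \<Longrightarrow> c = c'"
  using V1_V2_disjoint by (blast elim: edgeE)

lemma endpoint_mem: "e \<in> E \<Longrightarrow> C = V1 \<or> C = V2 \<Longrightarrow> endpoint C e \<in> C \<and> endpoint C e \<in> e"
  unfolding endpoint_def by (rule theI') (use edge_meets_V1 edge_meets_V2 edge_side_unique in blast)

lemma matching_subset: "is_matching E \<mu> \<Longrightarrow> \<mu> \<subseteq> E"
  unfolding is_matching_def by simp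

lemma matching_unique:
  assumes "is_matching E \<mu>" "e \<in> \<mu>" "f \<in> \<mu>" "v \<in> e" "v \<in> f" shows "e = f"
proof -
  have "finite (inc_edges \<mu> v)"
    using matching_subset[OF assms(1)] finite_E unfolding inc_edges_def by (auto intro: finite_subset)
  moreover have "card (inc_edges \<mu> v) \<le> Suc 0" using assms(1) unfolding is_matching_def by simp
  ultimately show ?thesis using assms card_le_Suc0_iff_eq unfolding inc_edges_def by blast
qed

lemma matchingI:
  assumes "L \<subseteq> E" "\<And>e f v. e \<in> L \<Longrightarrow> f \<in> L \<Longrightarrow> v \<in> e \<Longrightarrow> v \<in> f \<Longrightarrow> e = f"
  shows "is_matching E L"
  unfolding is_matching_def
proof (intro conjI allI)
  fix v
  have "finite (inc_edges L v)"
    using assms(1) finite_E unfolding inc_edges_def by (auto intro: finite_subset)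
  moreover have "\<forall>x \<in> inc_edges L v. \<forall>y \<in> inc_edges L v. x = y"
    using assms(2) unfolding inc_edges_def by blast
  ultimately show "card (inc_edges L v) \<le> 1" using card_le_Suc0_iff_eq by (metis One_nat_def)
qed fact

lemma medge_eqI: assumes "is_matching E \<mu>" "e \<in> \<mu>" "v \<in> e" shows "medge \<mu> v = e"
proof -
  have "(THE e. e \<in> \<mu> \<and> v \<in> e) = e"
    by (rule the_equality) (use assms matching_unique in blast)+
  then show ?thesis using assms unfolding medge_def by auto
qed

lemma medge_cases:
  assumes "is_matching E \<mu>" shows "medge \<mu> v = {} \<or> (medge \<mu> v \<in> \<mu> \<and> v \<in> medge \<mu> v)"
proof (cases "\<exists>e \<in> \<mu>. v \<in> e")
  case True
  then obtain e where "e \<in> \<mu>" "v \<in> e" by blast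
  then show ?thesis using medge_eqI[OF assms] by simp
qed (simp add: medge_def)

lemma medge_nonempty: "is_matching E \<mu> \<Longrightarrow> medge \<mu> v \<noteq> {} \<Longrightarrow> medge \<mu> v \<in> \<mu> \<and> v \<in> medge \<mu> v"
  using medge_cases by blast

lemma medge_empty_iff: "is_matching E \<mu> \<Longrightarrow> medge \<mu> v = {} \<longleftrightarrow> (\<forall>e \<in> \<mu>. v \<notin> e)"
  using medge_eqI[of \<mu> _ v] matching_subset[of \<mu>] edge_nonempty medge_cases[of \<mu> v] by blast

lemma medge_Opt: "is_matching E \<mu> \<Longrightarrow> medge \<mu> v \<in> Opt v"
  using medge_cases[of \<mu> v] matching_subset[of \<mu>] unfolding inc_edges_def by blast

lemma matching_eq_medge_image: assumes L: "is_matching E L" shows "L = medge L ` V1 - {{}}"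
proof
  show "L \<subseteq> medge L ` V1 - {{}}"
  proof
    fix e assume e: "e \<in> L"
    then have "e \<in> E" using matching_subset[OF L] by blast
    then obtain a where "a \<in> V1" "a \<in> e" "e \<noteq> {}" using edge_meets_V1 edge_nonempty by blast
    then show "e \<in> medge L ` V1 - {{}}" using medge_eqI[OF L e] by force
  qed
  show "medge L ` V1 - {{}} \<subseteq> L" using medge_nonempty[OF L] by blast
qed

lemma NUS_matching: "\<mu> \<in> S \<Longrightarrow> is_matching E \<mu>"
  unfolding NUS_def nu_stable_def by simp

lemma NUS_medge_Opt: "\<mu> \<in> S \<Longrightarrow> medge \<mu> v \<in> Opt v"
  using medge_Opt NUS_matching by blast

lemma NUS_not_blocked:
  "\<mu> \<in> S \<Longrightarrow> e \<in> E \<Longrightarrow> e \<notin> \<mu> \<Longrightarrow> weakly_blocks P \<mu> e \<Longrightarrow> e \<in> E2 \<and> \<not> strongly_blocks P \<mu> e"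
  using E1_E2 unfolding NUS_def nu_stable_def by blast

section \<open>Strict preferences between two stable matchings\<close>

lemma other_end_prefers:
  assumes \<sigma>: "\<sigma> \<in> S" and e: "e \<in> E" "e \<notin> \<sigma>" and vw: "v \<in> e" "w \<in> e" "v \<noteq> w"
    and pv: "P v e (medge \<sigma> v)"
  shows "P w (medge \<sigma> w) e \<and> (strict_pref P v e (medge \<sigma> v) \<longrightarrow> strict_pref P w (medge \<sigma> w) e)"
proof -
  have w: "w \<in> V1 \<union> V2" "e \<in> Opt w" "medge \<sigma> w \<in> Opt w"
    using edge_vertex e vw NUS_medge_Opt[OF \<sigma>] unfolding inc_edges_def by auto
  have False if "P w e (medge \<sigma> w)" "strict_pref P v e (medge \<sigma> v) \<or> strict_pref P w e (medge \<sigma> w)"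
  proof -
    have "weakly_blocks P \<sigma> e"
      unfolding weakly_blocks_def using e pv that(1) edge_two_vertices[OF e(1) vw] by blast
    moreover have "strongly_blocks P \<sigma> e" if "weakly_blocks P \<sigma> e"
      unfolding strongly_blocks_def using that \<open>strict_pref P v e _ \<or> _\<close> vw by blast
    ultimately show False using NUS_not_blocked[OF \<sigma> e] by blast
  qed
  then show ?thesis using pref_total[OF w] unfolding strict_pref_def by blast
qed

lemma strict_pref_partner:
  assumes \<mu>: "\<mu> \<in> S" and \<sigma>: "\<sigma> \<in> S" and c: "c \<in> V1 \<union> V2"
    and s: "strict_pref P c (medge \<mu> c) (medge \<sigma> c)"
  shows "medge \<mu> c \<in> \<mu>" "c \<in> medge \<mu> c"
    and "w \<in> medge \<mu> c \<Longrightarrow> w \<noteq> c \<Longrightarrow> medge \<mu> w = medge \<mu> c \<and> strict_pref P w (medge \<sigma> w) (medge \<mu> w)"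
proof -
  have m\<mu>: "is_matching E \<mu>" and m\<sigma>: "is_matching E \<sigma>" using \<mu> \<sigma> NUS_matching by auto
  have "medge \<mu> c \<noteq> {}" using strict_pref_nonempty[OF c NUS_medge_Opt[OF \<mu>] NUS_medge_Opt[OF \<sigma>] s] .
  then show e: "medge \<mu> c \<in> \<mu>" "c \<in> medge \<mu> c" using medge_nonempty[OF m\<mu>] by auto
  have "medge \<mu> c \<notin> \<sigma>"
    using s medge_eqI[OF m\<sigma> _ e(2)] unfolding strict_pref_def by auto
  moreover assume "w \<in> medge \<mu> c" "w \<noteq> c"
  ultimately show "medge \<mu> w = medge \<mu> c \<and> strict_pref P w (medge \<sigma> w) (medge \<mu> w)"
    using other_end_prefers[OF \<sigma> _ _ e(2)] s medge_eqI[OF m\<mu> e(1)] matching_subset[OF m\<mu>] e(1)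
    unfolding strict_pref_def by auto
qed

definition strictly_prefer :: "'a set \<Rightarrow> 'a set set \<Rightarrow> 'a set set \<Rightarrow> 'a set" where
  "strictly_prefer C \<mu> \<sigma> = {c \<in> C. strict_pref P c (medge \<mu> c) (medge \<sigma> c)}"

lemma partner_map_strictly_prefer:
  assumes \<mu>: "\<mu> \<in> S" and \<sigma>: "\<sigma> \<in> S" and sides: "(C = V1 \<and> C' = V2) \<or> (C = V2 \<and> C' = V1)"
  defines "f \<equiv> \<lambda>c. endpoint C' (medge \<mu> c)"
  shows "inj_on f (strictly_prefer C \<mu> \<sigma>)" and "f ` strictly_prefer C \<mu> \<sigma> \<subseteq> strictly_prefer C' \<sigma> \<mu>"
proof -
  have m\<mu>: "is_matching E \<mu>" using \<mu> NUS_matching by blast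
  have f: "medge \<mu> c \<in> E" "c \<in> medge \<mu> c" "f c \<in> C'" "f c \<in> medge \<mu> c"
    "medge \<mu> (f c) = medge \<mu> c" "strict_pref P (f c) (medge \<sigma> (f c)) (medge \<mu> (f c))"
    if "c \<in> strictly_prefer C \<mu> \<sigma>" for c
  proof -
    have c: "c \<in> C" "c \<in> V1 \<union> V2" "strict_pref P c (medge \<mu> c) (medge \<sigma> c)"
      using that sides unfolding strictly_prefer_def by auto
    show "medge \<mu> c \<in> E" "c \<in> medge \<mu> c"
      using strict_pref_partner(1,2)[OF \<mu> \<sigma> c(2,3)] matching_subset[OF m\<mu>] by auto
    then show "f c \<in> C'" "f c \<in> medge \<mu> c" using endpoint_mem sides unfolding f_def by blast+
    moreover have "f c \<noteq> c" using \<open>f c \<in> C'\<close> c(1) sides V1_V2_disjoint by auto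
    ultimately show "medge \<mu> (f c) = medge \<mu> c" "strict_pref P (f c) (medge \<sigma> (f c)) (medge \<mu> (f c))"
      using strict_pref_partner(3)[OF \<mu> \<sigma> c(2,3), of "f c"] by blast+
  qed
  show "inj_on f (strictly_prefer C \<mu> \<sigma>)"
  proof
    fix c c' assume c: "c \<in> strictly_prefer C \<mu> \<sigma>" "c' \<in> strictly_prefer C \<mu> \<sigma>" "f c = f c'"
    then have "medge \<mu> c = medge \<mu> c'" using f(5) by metis
    then show "c = c'"
      using edge_side_unique[OF f(1)[OF c(1)] f(2)[OF c(1)]] f(2)[OF c(2)] c sides
      unfolding strictly_prefer_def by auto
  qed
  show "f ` strictly_prefer C \<mu> \<sigma> \<subseteq> strictly_prefer C' \<sigma> \<mu>"
    using f(3,6) unfolding strictly_prefer_def by auto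
qed

text \<open>The partner maps of the two sides inject the strict-preference sets into each other,
  so by counting they are bijections.\<close>
lemma partner_map_onto:
  assumes \<mu>: "\<mu> \<in> S" and \<sigma>: "\<sigma> \<in> S" and sides: "(C = V1 \<and> C' = V2) \<or> (C = V2 \<and> C' = V1)"
  shows "(\<lambda>c. endpoint C' (medge \<mu> c)) ` strictly_prefer C \<mu> \<sigma> = strictly_prefer C' \<sigma> \<mu>"
proof -
  have fin: "finite (strictly_prefer D \<mu>' \<sigma>')" if "D = V1 \<or> D = V2" for D \<mu>' \<sigma>'
    using that finite_V1 finite_V2 unfolding strictly_prefer_def by auto
  note f = partner_map_strictly_prefer[OF \<mu> \<sigma> sides]
  have "card (strictly_prefer C' \<sigma> \<mu>) \<le> card (strictly_prefer C \<mu> \<sigma>)"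
    using card_inj_on_le[OF partner_map_strictly_prefer[OF \<sigma> \<mu>, of C' C]] sides fin by blast
  also have "\<dots> = card ((\<lambda>c. endpoint C' (medge \<mu> c)) ` strictly_prefer C \<mu> \<sigma>)"
    using card_image[OF f(1)] by simp
  finally show ?thesis
    using card_subset_eq[OF fin f(2)] card_mono[OF fin f(2)] sides by auto
qed

lemma strict_pref_partner_converse:
  assumes \<mu>: "\<mu> \<in> S" and \<sigma>: "\<sigma> \<in> S" and sides: "(C = V1 \<and> C' = V2) \<or> (C = V2 \<and> C' = V1)"
    and c: "c \<in> C" and s: "strict_pref P c (medge \<sigma> c) (medge \<mu> c)"
  obtains c' where "c' \<in> C'" "medge \<mu> c' = medge \<mu> c" "c \<in> medge \<mu> c" "c' \<in> medge \<mu> c"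
    "strict_pref P c' (medge \<mu> c') (medge \<sigma> c')"
proof -
  have "c \<in> strictly_prefer C \<sigma> \<mu>" using c s unfolding strictly_prefer_def by simp
  then obtain c' where c': "c' \<in> strictly_prefer C' \<mu> \<sigma>" and c_def: "c = endpoint C (medge \<mu> c')"
    using partner_map_onto[OF \<mu> \<sigma>, of C' C] sides by blast
  then have c'_pref: "c' \<in> C'" "c' \<in> V1 \<union> V2" "strict_pref P c' (medge \<mu> c') (medge \<sigma> c')"
    using sides unfolding strictly_prefer_def by auto
  note e = strict_pref_partner[OF \<mu> \<sigma> c'_pref(2,3)]
  have "c \<in> medge \<mu> c'"
    using c_def endpoint_mem[of "medge \<mu> c'" C] e(1) matching_subset[OF NUS_matching[OF \<mu>]] sides by auto
  moreover have "c \<noteq> c'" using c c'_pref(1) sides V1_V2_disjoint by auto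
  ultimately have "medge \<mu> c = medge \<mu> c'" using e(3) by blast
  then show ?thesis using that c'_pref(1,3) e(2) \<open>c \<in> medge \<mu> c'\<close> by simp
qed


section \<open>The meet and the join\<close>

lemma better_edge_cases:
  assumes \<mu>: "\<mu> \<in> S" and \<sigma>: "\<sigma> \<in> S" and ne: "better_edge P \<mu> \<sigma> a \<noteq> {}"
  shows "(better_edge P \<mu> \<sigma> a = medge \<mu> a \<and> P a (medge \<mu> a) (medge \<sigma> a) \<and> medge \<mu> a \<in> \<mu> \<and> a \<in> medge \<mu> a)
       \<or> (better_edge P \<mu> \<sigma> a = medge \<sigma> a \<and> \<not> P a (medge \<mu> a) (medge \<sigma> a) \<and> medge \<sigma> a \<in> \<sigma> \<and> a \<in> medge \<sigma> a)"
proof (cases "P a (medge \<mu> a) (medge \<sigma> a)")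
  case True
  then show ?thesis using ne medge_nonempty[OF NUS_matching[OF \<mu>]] unfolding better_edge_def by simp
next
  case False
  then show ?thesis using ne medge_nonempty[OF NUS_matching[OF \<sigma>]] unfolding better_edge_def by simp
qed

lemma better_edge_in_E:
  assumes "\<mu> \<in> S" "\<sigma> \<in> S" "better_edge P \<mu> \<sigma> a \<noteq> {}" shows "better_edge P \<mu> \<sigma> a \<in> E"
  using better_edge_cases[OF assms] matching_subset[OF NUS_matching[OF assms(1)]]
    matching_subset[OF NUS_matching[OF assms(2)]] by auto

text \<open>Otherwise v would weakly prefer f to e by the stability of \<sigma> (as a weakly prefers e),
  and strictly prefer e to f by the stability of \<mu> (as a' strictly prefers f).\<close>
lemma better_edges_agree:
  assumes \<mu>: "\<mu> \<in> S" and \<sigma>: "\<sigma> \<in> S"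
    and e: "e \<in> \<mu>" "a \<in> e" "a \<in> V1" "P a (medge \<mu> a) (medge \<sigma> a)"
    and f: "f \<in> \<sigma>" "a' \<in> f" "a' \<in> V1" "\<not> P a' (medge \<mu> a') (medge \<sigma> a')"
    and v: "v \<in> e" "v \<in> f" "v \<in> V2"
  shows "e = f"
proof (rule ccontr)
  assume "e \<noteq> f"
  have m\<mu>: "is_matching E \<mu>" and m\<sigma>: "is_matching E \<sigma>" using \<mu> \<sigma> NUS_matching by auto
  have E: "e \<in> E" "f \<in> E" using e f m\<mu> m\<sigma> matching_subset by auto
  have edges: "medge \<mu> a = e" "medge \<mu> v = e" "medge \<sigma> a' = f" "medge \<sigma> v = f"
    using medge_eqI[OF m\<mu> e(1)] medge_eqI[OF m\<sigma> f(1)] e f v by auto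
  have ne: "a \<noteq> v" "a' \<noteq> v" using e f v V1_V2_disjoint by auto
  have "e \<notin> \<sigma>" using matching_unique[OF m\<sigma> _ f(1) v(1,2)] \<open>e \<noteq> f\<close> by blast
  then have "P v f e" using other_end_prefers[OF \<sigma> E(1) _ e(2) v(1) ne(1)] e(4) edges by simp
  have s: "strict_pref P a' f (medge \<mu> a')"
    using not_pref_strict[OF _ NUS_medge_Opt[OF \<mu>] NUS_medge_Opt[OF \<sigma>] f(4)] f(3) edges by simp
  then have "f \<notin> \<mu>" using medge_eqI[OF m\<mu> _ f(2)] unfolding strict_pref_def by auto
  then have "strict_pref P v e f"
    using other_end_prefers[OF \<mu> E(2) _ f(2) v(2) ne(2)] s edges unfolding strict_pref_def by auto
  then show False using \<open>P v f e\<close> unfolding strict_pref_def by simp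
qed

lemma meet_matching:
  assumes \<mu>: "\<mu> \<in> S" and \<sigma>: "\<sigma> \<in> S"
  shows "is_matching E (meet V1 P \<mu> \<sigma>)"
proof (rule matchingI)
  note cases = better_edge_cases[OF \<mu> \<sigma>]
  show "meet V1 P \<mu> \<sigma> \<subseteq> E" using better_edge_in_E[OF \<mu> \<sigma>] unfolding meet_eq_better_edge by blast
  fix e f v assume ef: "e \<in> meet V1 P \<mu> \<sigma>" "f \<in> meet V1 P \<mu> \<sigma>" "v \<in> e" "v \<in> f"
  then obtain a a' where a: "a \<in> V1" "e = better_edge P \<mu> \<sigma> a" "e \<noteq> {}"
    and a': "a' \<in> V1" "f = better_edge P \<mu> \<sigma> a'" "f \<noteq> {}"
    unfolding meet_eq_better_edge by blast
  have E: "e \<in> E" "f \<in> E" using better_edge_in_E[OF \<mu> \<sigma>] a a' by auto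
  show "e = f"
  proof (cases "v \<in> V2")
    case False
    then have "v \<in> V1" using edge_vertex E(1) ef(3) by blast
    moreover have "a \<in> e" "a' \<in> f" using cases a a' by blast+
    ultimately have "v = a" "v = a'" using edge_side_unique E ef(3,4) a(1) a'(1) by blast+
    then show ?thesis using a a' by simp
  next
    case True
    show ?thesis
      using cases[of a] cases[of a'] a a' ef True
        matching_unique[OF NUS_matching[OF \<mu>]] matching_unique[OF NUS_matching[OF \<sigma>]]
        better_edges_agree[OF \<mu> \<sigma>, of e a f a' v] better_edges_agree[OF \<mu> \<sigma>, of f a' e a v]
      by metis
  qed
qed

lemma medge_meet_V1:
  assumes \<mu>: "\<mu> \<in> S" and \<sigma>: "\<sigma> \<in> S" and a: "a \<in> V1"
  shows "medge (meet V1 P \<mu> \<sigma>) a = better_edge P \<mu> \<sigma> a"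
proof (cases "better_edge P \<mu> \<sigma> a = {}")
  case True
  have "a \<notin> e" if "e \<in> meet V1 P \<mu> \<sigma>" for e
  proof
    assume "a \<in> e"
    obtain a' where a': "a' \<in> V1" "e = better_edge P \<mu> \<sigma> a'" "e \<noteq> {}"
      using \<open>e \<in> _\<close> unfolding meet_eq_better_edge by blast
    then have "a' \<in> e" "e \<in> E" using better_edge_cases[OF \<mu> \<sigma>] better_edge_in_E[OF \<mu> \<sigma>] by blast+
    then have "a = a'" using edge_side_unique \<open>a \<in> e\<close> a a' by blast
    then show False using True a' by simp
  qed
  then show ?thesis using medge_empty_iff[OF meet_matching[OF \<mu> \<sigma>]] True by simp
next
  case False
  then have "better_edge P \<mu> \<sigma> a \<in> meet V1 P \<mu> \<sigma>" "a \<in> better_edge P \<mu> \<sigma> a"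
    using a better_edge_cases[OF \<mu> \<sigma>] unfolding meet_eq_better_edge by blast+
  then show ?thesis using medge_eqI[OF meet_matching[OF \<mu> \<sigma>]] by blast
qed

lemma medge_meet_V2_unmatched:
  assumes \<mu>: "\<mu> \<in> S" and \<sigma>: "\<sigma> \<in> S" and b: "b \<in> V2" and unmatched: "medge \<mu> b = {}"
  shows "medge (meet V1 P \<mu> \<sigma>) b = {}"
proof -
  have m\<mu>: "is_matching E \<mu>" and m\<sigma>: "is_matching E \<sigma>" using \<mu> \<sigma> NUS_matching by auto
  have "b \<notin> e" if "e \<in> meet V1 P \<mu> \<sigma>" for e
  proof
    assume "b \<in> e"
    obtain a where "a \<in> V1" "e = better_edge P \<mu> \<sigma> a" "e \<noteq> {}"
      using \<open>e \<in> meet V1 P \<mu> \<sigma>\<close> unfolding meet_eq_better_edge by blast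
    then have "e \<in> \<mu> \<or> e \<in> \<sigma>" "e \<in> E"
      using better_edge_cases[OF \<mu> \<sigma>, of a] better_edge_in_E[OF \<mu> \<sigma>, of a] by auto
    then have "medge \<sigma> b = e"
      using unmatched medge_eqI[OF m\<sigma> _ \<open>b \<in> e\<close>] medge_empty_iff[OF m\<mu>] \<open>b \<in> e\<close> by blast
    then have "strict_pref P b (medge \<sigma> b) (medge \<mu> b)"
      using unmatched pref_empty[of b e] b \<open>e \<in> E\<close> \<open>b \<in> e\<close>
      unfolding strict_pref_def inc_edges_def by simp
    then obtain a' where "b \<in> medge \<mu> b"
      using strict_pref_partner_converse[OF \<mu> \<sigma>, of V2 V1] b by blast
    then show False using unmatched by simp
  qed
  then show ?thesis using medge_empty_iff[OF meet_matching[OF \<mu> \<sigma>]] by simp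
qed

lemma medge_meet_V2_first:
  assumes \<mu>: "\<mu> \<in> S" and \<sigma>: "\<sigma> \<in> S" and b: "b \<in> V2" and matched: "medge \<mu> b \<noteq> {}"
    and pref: "P b (medge \<sigma> b) (medge \<mu> b)"
  shows "medge (meet V1 P \<mu> \<sigma>) b = medge \<mu> b"
proof -
  have m\<mu>: "is_matching E \<mu>" using \<mu> NUS_matching by auto
  have e: "medge \<mu> b \<in> \<mu>" "b \<in> medge \<mu> b" "medge \<mu> b \<in> E"
    using medge_nonempty[OF m\<mu> matched] matching_subset[OF m\<mu>] by auto
  define a where "a = endpoint V1 (medge \<mu> b)"
  have a: "a \<in> V1" "a \<in> medge \<mu> b" "medge \<mu> a = medge \<mu> b"
    using endpoint_mem[OF e(3)] medge_eqI[OF m\<mu> e(1)] unfolding a_def by auto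
  have "P a (medge \<mu> a) (medge \<sigma> a)"
  proof (rule ccontr)
    assume "\<not> P a (medge \<mu> a) (medge \<sigma> a)"
    then have "strict_pref P a (medge \<sigma> a) (medge \<mu> a)"
      using not_pref_strict[OF _ NUS_medge_Opt[OF \<mu>] NUS_medge_Opt[OF \<sigma>]] a(1) by blast
    then obtain b' where b': "b' \<in> V2" "b' \<in> medge \<mu> a" "strict_pref P b' (medge \<mu> b') (medge \<sigma> b')"
      "medge \<mu> b' = medge \<mu> a"
      using strict_pref_partner_converse[OF \<mu> \<sigma>, of V1 V2] a(1) by blast
    then have "b' = b" using edge_side_unique[OF e(3), of b' b V2] e(2) a(3) b by simp
    then show False using b' pref unfolding strict_pref_def by simp
  qed
  then have "better_edge P \<mu> \<sigma> a = medge \<mu> b" using a(3) unfolding better_edge_def by simp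
  then have "medge \<mu> b \<in> meet V1 P \<mu> \<sigma>"
    using imageI[of a V1 "better_edge P \<mu> \<sigma>"] a(1) matched unfolding meet_eq_better_edge by auto
  then show ?thesis using medge_eqI[OF meet_matching[OF \<mu> \<sigma>] _ e(2)] by simp
qed

lemma medge_meet_V2_second:
  assumes \<mu>: "\<mu> \<in> S" and \<sigma>: "\<sigma> \<in> S" and b: "b \<in> V2" and pref: "\<not> P b (medge \<sigma> b) (medge \<mu> b)"
  shows "medge (meet V1 P \<mu> \<sigma>) b = medge \<sigma> b"
proof -
  have "strict_pref P b (medge \<mu> b) (medge \<sigma> b)"
    using not_pref_strict[OF _ NUS_medge_Opt[OF \<sigma>] NUS_medge_Opt[OF \<mu>] pref] b by blast
  then obtain a where a: "a \<in> V1" "medge \<sigma> a = medge \<sigma> b" "b \<in> medge \<sigma> b"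
    "strict_pref P a (medge \<sigma> a) (medge \<mu> a)"
    using strict_pref_partner_converse[OF \<sigma> \<mu>, of V2 V1] b by blast
  then have "better_edge P \<mu> \<sigma> a = medge \<sigma> b"
    unfolding better_edge_def strict_pref_def by simp
  then have "medge \<sigma> b \<in> meet V1 P \<mu> \<sigma>"
    using imageI[of a V1 "better_edge P \<mu> \<sigma>"] a(1,3) unfolding meet_eq_better_edge by auto
  then show ?thesis using medge_eqI[OF meet_matching[OF \<mu> \<sigma>] _ a(3)] by simp
qed

lemma medge_meet_V2:
  assumes \<mu>: "\<mu> \<in> S" and \<sigma>: "\<sigma> \<in> S" and b: "b \<in> V2"
  shows "medge (meet V1 P \<mu> \<sigma>) b = worse_edge P \<mu> \<sigma> b"
  using medge_meet_V2_unmatched[OF assms] medge_meet_V2_first[OF assms] medge_meet_V2_second[OF assms]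
  unfolding worse_edge_def by (cases "medge \<mu> b = {}") auto

text \<open>An edge blocking the meet blocks, at least as strongly, whichever of the two matchings
  supplies the meet's edge at its endpoint in V2.\<close>
lemma meet_blocking_edge:
  assumes \<mu>: "\<mu> \<in> S" and \<sigma>: "\<sigma> \<in> S" and g: "g \<in> E" "weakly_blocks P (meet V1 P \<mu> \<sigma>) g"
  obtains Z where "Z \<in> {\<mu>, \<sigma>}" "weakly_blocks P Z g"
    "strongly_blocks P (meet V1 P \<mu> \<sigma>) g \<Longrightarrow> strongly_blocks P Z g"
proof -
  let ?L = "meet V1 P \<mu> \<sigma>"
  obtain a b where ab: "g = {a, b}" "a \<in> V1" "b \<in> V2" using edgeE g(1) by blast
  define Z where "Z = (if P b (medge \<sigma> b) (medge \<mu> b) then \<mu> else \<sigma>)"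
  have Z: "Z \<in> {\<mu>, \<sigma>}" "Z \<in> S" unfolding Z_def using \<mu> \<sigma> by auto
  have Lb: "medge ?L b = medge Z b"
    using medge_meet_V2[OF \<mu> \<sigma> ab(3)] unfolding Z_def worse_edge_def by simp
  have La: "medge ?L a = better_edge P \<mu> \<sigma> a" using medge_meet_V1[OF \<mu> \<sigma> ab(2)] .
  have aV: "a \<in> V1 \<union> V2" using ab by blast
  have Opt_a: "better_edge P \<mu> \<sigma> a \<in> Opt a" "medge Z a \<in> Opt a" "g \<in> Opt a"
    using NUS_medge_Opt[OF \<mu>] NUS_medge_Opt[OF \<sigma>] NUS_medge_Opt[OF Z(2)] g(1) ab
    unfolding better_edge_def inc_edges_def by auto
  have better_Z: "P a (better_edge P \<mu> \<sigma> a) (medge Z a)"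
    using Z(1) pref_total[OF aV NUS_medge_Opt[OF \<mu>] NUS_medge_Opt[OF \<sigma>]]
      pref_refl[OF aV NUS_medge_Opt[OF \<mu>]] pref_refl[OF aV NUS_medge_Opt[OF \<sigma>]]
    unfolding better_edge_def by auto
  have "g \<notin> Z"
  proof
    assume "g \<in> Z"
    then have "medge ?L b = g" using Lb medge_eqI[OF NUS_matching[OF Z(2)]] ab by simp
    then show False
      using g(2) medge_nonempty[OF meet_matching[OF \<mu> \<sigma>], of b] ab unfolding weakly_blocks_def by auto
  qed
  moreover have "P a g (better_edge P \<mu> \<sigma> a)" "P b g (medge Z b)"
    using g(2) ab La Lb unfolding weakly_blocks_def by auto
  ultimately have wb: "weakly_blocks P Z g"
    using pref_trans[OF aV Opt_a(3,1,2) _ better_Z] ab unfolding weakly_blocks_def by auto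
  have "strongly_blocks P Z g" if sb: "strongly_blocks P ?L g"
  proof -
    obtain w where "w \<in> g" "strict_pref P w g (medge ?L w)"
      using sb unfolding strongly_blocks_def by blast
    then have "strict_pref P a g (medge Z a) \<or> strict_pref P b g (medge Z b)"
      using strict_pref_trans[OF aV Opt_a(3,1,2) _ better_Z] ab La Lb by auto
    then show ?thesis using wb ab unfolding strongly_blocks_def by auto
  qed
  with Z(1) wb show ?thesis by (rule that)
qed

lemma meet_stable:
  assumes \<mu>: "\<mu> \<in> S" and \<sigma>: "\<sigma> \<in> S"
  shows "meet V1 P \<mu> \<sigma> \<in> S"
proof -
  let ?L = "meet V1 P \<mu> \<sigma>"
  have blocked_side: "g \<in> E2 \<and> \<not> strongly_blocks P ?L g"
    if g: "g \<in> E" "weakly_blocks P ?L g" for g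
  proof -
    obtain Z where Z: "Z \<in> {\<mu>, \<sigma>}" "weakly_blocks P Z g"
      "strongly_blocks P ?L g \<Longrightarrow> strongly_blocks P Z g"
      using meet_blocking_edge[OF \<mu> \<sigma> g] by blast
    have "Z \<in> S" using Z(1) \<mu> \<sigma> by blast
    moreover have "g \<notin> Z" using Z(2) unfolding weakly_blocks_def by blast
    ultimately show ?thesis using NUS_not_blocked[OF _ g(1) _ Z(2)] Z(3) by blast
  qed
  have "\<not> weakly_blocks P ?L g" if "g \<in> E1 - ?L" for g
    using blocked_side[of g] that E1_E2 E1_E2_disjoint by blast
  moreover have "\<not> strongly_blocks P ?L g" if "g \<in> E2 - ?L" for g
    using blocked_side[of g] that E1_E2 unfolding strongly_blocks_def by blast
  ultimately show ?thesis using meet_matching[OF \<mu> \<sigma>] unfolding NUS_def nu_stable_def by blast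
qed

sublocale swapped: matching_setting V2 V1 E E1 E2 P
  using setting_swap[OF setting] by unfold_locales

lemma join_eq_swapped_meet:
  assumes \<mu>: "\<mu> \<in> S" and \<sigma>: "\<sigma> \<in> S"
  shows "join V1 P \<mu> \<sigma> = meet V2 P \<mu> \<sigma>"
proof -
  let ?M = "meet V2 P \<mu> \<sigma>"
  have "join V1 P \<mu> \<sigma> = medge ?M ` V1 - {{}}"
    unfolding join_eq_worse_edge using swapped.medge_meet_V2[OF \<mu> \<sigma>] by (metis (no_types) image_cong)
  also have "\<dots> = ?M"
    using matching_eq_medge_image[OF NUS_matching[OF swapped.meet_stable[OF \<mu> \<sigma>]]] by simp
  finally show ?thesis .
qed

lemma join_stable: "\<mu> \<in> S \<Longrightarrow> \<sigma> \<in> S \<Longrightarrow> join V1 P \<mu> \<sigma> \<in> S"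
  using join_eq_swapped_meet swapped.meet_stable by simp

lemma medge_join_V1:
  "\<mu> \<in> S \<Longrightarrow> \<sigma> \<in> S \<Longrightarrow> a \<in> V1 \<Longrightarrow> medge (join V1 P \<mu> \<sigma>) a = worse_edge P \<mu> \<sigma> a"
  using join_eq_swapped_meet swapped.medge_meet_V2 by simp

section \<open>Ranks and the lattice of classes\<close>

definition rank :: "'a \<Rightarrow> 'a set \<Rightarrow> nat" where
  "rank v x = card {y \<in> Opt v. P v x y}"

lemma pref_iff_rank_le:
  assumes v: "v \<in> V1 \<union> V2" and x: "x \<in> Opt v" and y: "y \<in> Opt v"
  shows "P v x y \<longleftrightarrow> rank v y \<le> rank v x"
proof
  assume "P v x y"
  then have "{z \<in> Opt v. P v y z} \<subseteq> {z \<in> Opt v. P v x z}" using pref_trans[OF v x y] by blast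
  then show "rank v y \<le> rank v x" unfolding rank_def by (rule card_mono[rotated]) (use finite_Opt in auto)
next
  assume le: "rank v y \<le> rank v x"
  show "P v x y"
  proof (rule ccontr)
    assume "\<not> P v x y"
    then have "{z \<in> Opt v. P v x z} \<subset> {z \<in> Opt v. P v y z}"
      using pref_total[OF v x y] pref_trans[OF v y x] pref_refl[OF v y] y by blast
    then have "rank v x < rank v y" unfolding rank_def by (rule psubset_card_mono[rotated]) (use finite_Opt in auto)
    then show False using le by simp
  qed
qed

lemma rank_medge_meet:
  assumes "\<mu> \<in> S" "\<sigma> \<in> S" "a \<in> V1"
  shows "rank a (medge (meet V1 P \<mu> \<sigma>) a) = max (rank a (medge \<mu> a)) (rank a (medge \<sigma> a))"
  using medge_meet_V1[OF assms] pref_iff_rank_le[of a "medge \<mu> a" "medge \<sigma> a"] assms NUS_medge_Opt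
  unfolding better_edge_def by (auto simp: max_def)

lemma rank_medge_join:
  assumes "\<mu> \<in> S" "\<sigma> \<in> S" "a \<in> V1"
  shows "rank a (medge (join V1 P \<mu> \<sigma>) a) = min (rank a (medge \<mu> a)) (rank a (medge \<sigma> a))"
  using medge_join_V1[OF assms] pref_iff_rank_le[of a "medge \<sigma> a" "medge \<mu> a"] assms NUS_medge_Opt
  unfolding worse_edge_def by (auto simp: min_def)

abbreviation R :: "('a set set \<times> 'a set set) set" where
  "R \<equiv> equivR V1 E E1 E2 P"

lemma equivR_iff:
  "(\<mu>, \<sigma>) \<in> R \<longleftrightarrow> \<mu> \<in> S \<and> \<sigma> \<in> S \<and> (\<forall>a \<in> V1. rank a (medge \<mu> a) = rank a (medge \<sigma> a))"
proof -
  have "indiff P a (medge \<mu> a) (medge \<sigma> a) \<longleftrightarrow> rank a (medge \<mu> a) = rank a (medge \<sigma> a)"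
    if "\<mu> \<in> S" "\<sigma> \<in> S" "a \<in> V1" for a
    using pref_iff_rank_le[of a "medge \<mu> a" "medge \<sigma> a"] pref_iff_rank_le[of a "medge \<sigma> a" "medge \<mu> a"]
      that NUS_medge_Opt unfolding indiff_def by auto
  then show ?thesis unfolding equivR_def by auto
qed

lemma equiv_equivR: "equiv S R"
  by (rule equivI) (auto simp: equivR_iff intro!: refl_onI symI transI)

lemma class_eq_iff:
  "\<mu> \<in> S \<Longrightarrow> \<sigma> \<in> S \<Longrightarrow> R `` {\<mu>} = R `` {\<sigma>} \<longleftrightarrow> (\<forall>a \<in> V1. rank a (medge \<mu> a) = rank a (medge \<sigma> a))"
  using eq_equiv_class_iff[OF equiv_equivR] equivR_iff by blast

lemma equivR_some_in_class: "\<mu> \<in> S \<Longrightarrow> (\<mu>, SOME x. x \<in> R `` {\<mu>}) \<in> R"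
  using someI[of "\<lambda>x. x \<in> R `` {\<mu>}", OF equiv_class_self[OF equiv_equivR]] by simp

lemma meetC_classes:
  assumes "\<mu> \<in> S" "\<sigma> \<in> S"
  shows "meetC V1 E E1 E2 P (R `` {\<mu>}) (R `` {\<sigma>}) = R `` {meet V1 P \<mu> \<sigma>}"
proof -
  obtain x y where "(SOME x. x \<in> R `` {\<mu>}) = x" "(SOME y. y \<in> R `` {\<sigma>}) = y" by blast
  moreover have "(\<mu>, x) \<in> R" "(\<sigma>, y) \<in> R" using equivR_some_in_class assms calculation by metis+
  ultimately show ?thesis
    using assms by (simp add: meetC_def equivR_iff class_eq_iff meet_stable rank_medge_meet)
qed

lemma joinC_classes:
  assumes "\<mu> \<in> S" "\<sigma> \<in> S"
  shows "joinC V1 E E1 E2 P (R `` {\<mu>}) (R `` {\<sigma>}) = R `` {join V1 P \<mu> \<sigma>}"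
proof -
  obtain x y where "(SOME x. x \<in> R `` {\<mu>}) = x" "(SOME y. y \<in> R `` {\<sigma>}) = y" by blast
  moreover have "(\<mu>, x) \<in> R" "(\<sigma>, y) \<in> R" using equivR_some_in_class assms calculation by metis+
  ultimately show ?thesis
    using assms by (simp add: joinC_def equivR_iff class_eq_iff join_stable rank_medge_join)
qed

lemma class_of_member: "X \<in> S // R \<Longrightarrow> \<mu> \<in> X \<Longrightarrow> \<mu> \<in> S \<and> X = R `` {\<mu>}"
  using equiv_class_eq_iff[OF equiv_equivR] by (auto elim!: quotientE)

lemma classes_ops_representatives:
  assumes "X \<in> S // R" "Y \<in> S // R" "\<mu> \<in> X" "\<sigma> \<in> Y"
  shows "meet V1 P \<mu> \<sigma> \<in> S" "join V1 P \<mu> \<sigma> \<in> S"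
    "meetC V1 E E1 E2 P X Y = R `` {meet V1 P \<mu> \<sigma>}" "joinC V1 E E1 E2 P X Y = R `` {join V1 P \<mu> \<sigma>}"
  using class_of_member[OF assms(1,3)] class_of_member[OF assms(2,4)]
  by (simp_all add: meet_stable join_stable meetC_classes joinC_classes)

lemma classes_lattice_laws:
  assumes "X \<in> S // R" "Y \<in> S // R" "Z \<in> S // R"
  defines "mC \<equiv> meetC V1 E E1 E2 P" and "jC \<equiv> joinC V1 E E1 E2 P"
  shows "mC X Y \<in> S // R" "jC X Y \<in> S // R"
    and "mC X X = X" "jC X X = X"
    and "mC X Y = mC Y X" "jC X Y = jC Y X"
    and "mC (mC X Y) Z = mC X (mC Y Z)" "jC (jC X Y) Z = jC X (jC Y Z)"
    and "mC X (jC X Y) = X" "jC X (mC X Y) = X"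
    and "mC X (jC Y Z) = jC (mC X Y) (mC X Z)" "jC X (mC Y Z) = mC (jC X Y) (jC X Z)"
proof -
  obtain x y z where xyz: "x \<in> S" "y \<in> S" "z \<in> S" "X = R `` {x}" "Y = R `` {y}" "Z = R `` {z}"
    using assms(1-3) by (metis quotientE)
  note simps = mC_def jC_def xyz meetC_classes joinC_classes class_eq_iff meet_stable join_stable
    rank_medge_meet rank_medge_join
  show "mC X Y \<in> S // R" "jC X Y \<in> S // R" using xyz by (simp_all add: simps quotientI)
  show "mC X X = X" "jC X X = X" by (simp_all add: simps)
  show "mC X Y = mC Y X" "jC X Y = jC Y X" by (simp_all add: simps max.commute min.commute)
  show "mC (mC X Y) Z = mC X (mC Y Z)" "jC (jC X Y) Z = jC X (jC Y Z)"
    by (simp_all add: simps max.assoc min.assoc)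
  show "mC X (jC X Y) = X" "jC X (mC X Y) = X" by (simp_all add: simps)
  show "mC X (jC Y Z) = jC (mC X Y) (mC X Z)" by (simp add: simps max_min_distrib2)
  show "jC X (mC Y Z) = mC (jC X Y) (jC X Z)" by (simp add: simps min_max_distrib2)
qed

end

theorem theorem5p5:
  fixes V1 V2 :: "'a set" and E E1 E2 :: "'a set set"
    and P :: "'a \<Rightarrow> 'a set \<Rightarrow> 'a set \<Rightarrow> bool"
  assumes "setting V1 V2 E E1 E2 P"
  defines "S \<equiv> NUS E E1 E2 P"
    and "R \<equiv> equivR V1 E E1 E2 P"
    and "C \<equiv> classes V1 E E1 E2 P"
    and "mC \<equiv> meetC V1 E E1 E2 P"
    and "jC \<equiv> joinC V1 E E1 E2 P"
  shows
    \<comment> \<open>well-definedness: the class operations agree with any choice of representatives\<close>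
    "(\<forall>X \<in> C. \<forall>Y \<in> C. \<forall>\<mu> \<in> X. \<forall>\<sigma> \<in> Y.
        meet V1 P \<mu> \<sigma> \<in> S \<and> join V1 P \<mu> \<sigma> \<in> S \<and>
        mC X Y = R `` {meet V1 P \<mu> \<sigma>} \<and> jC X Y = R `` {join V1 P \<mu> \<sigma>})
     \<and> (\<forall>X \<in> C. \<forall>Y \<in> C. mC X Y \<in> C \<and> jC X Y \<in> C)
     \<comment> \<open>idempotence\<close>
     \<and> (\<forall>X \<in> C. mC X X = X \<and> jC X X = X)
     \<comment> \<open>commutativity\<close>
     \<and> (\<forall>X \<in> C. \<forall>Y \<in> C. mC X Y = mC Y X \<and> jC X Y = jC Y X)
     \<comment> \<open>associativity\<close>
     \<and> (\<forall>X \<in> C. \<forall>Y \<in> C. \<forall>Z \<in> C.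
          mC (mC X Y) Z = mC X (mC Y Z) \<and> jC (jC X Y) Z = jC X (jC Y Z))
     \<comment> \<open>absorption\<close>
     \<and> (\<forall>X \<in> C. \<forall>Y \<in> C. mC X (jC X Y) = X \<and> jC X (mC X Y) = X)
     \<comment> \<open>distributivity\<close>
     \<and> (\<forall>X \<in> C. \<forall>Y \<in> C. \<forall>Z \<in> C.
          mC X (jC Y Z) = jC (mC X Y) (mC X Z) \<and> jC X (mC Y Z) = mC (jC X Y) (jC X Z))"
proof -
  interpret matching_setting V1 V2 E E1 E2 P by (rule matching_setting.intro) fact
  have C: "C = S // R" unfolding C_def S_def R_def classes_def ..
  show ?thesis
    unfolding C S_def R_def mC_def jC_def
    by (intro conjI ballI; rule classes_ops_representatives classes_lattice_laws; assumption)
qed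

end
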